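(* Let $n\ge 2$ and $\rho>0$, and let each channel gain $|h_i|^2$, $i=1,\dots,n$, be exponentially distributed with mean $1$ (Rayleigh fading). Then the best-case zero-outage capacity $\overline{R^{0}}(\rho)=\log_2(1+\rho\,\phi(0))$ satisfies $$\overline{R^{0}}(\rho)\le\log_2\bigl(1+\rho\, n\log(n)\bigr).$$
   Context: Here $G(x)=-\log(1-x)$ is the quantile of the $\mathrm{Exp}(1)$ distribution (natural logarithm). Define $H_0(x)=(n-1)G((n-1)x)+G(1-x)=-(n-1)\log(1-(n-1)x)-\log(x)$, $c_n(0)=\min\{c\in[0,\tfrac1n]: \int_c^{1/n}H_0(t)\,dt\ge(\tfrac1n-c)H_0(c)\}$, and $\phi(0)=H_0(c_n(0))$ if $c_n(0)>0$, $\phi(0)=n$ if $c_n(0)=0$. The quantity $\log_2(1+\rho\phi(0))$ is the best-case (over joint distributions with these marginals) zero-outage capacity without CSI at the transmitter. *)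

theory Defs
  imports "HOL-Analysis.Analysis"
begin

text \<open>Quantile function of the Exp(1) distribution (Rayleigh fading: |h_i|^2 ~ Exp(1)).\<close>
definition G :: "real \<Rightarrow> real" where
  "G x = - ln (1 - x)"

definition H0 :: "nat \<Rightarrow> real \<Rightarrow> real" where
  "H0 n x = real (n - 1) * G (real (n - 1) * x) + G (1 - x)"

text \<open>The admissible set of the minimisation defining c_n(0).  At c = 0 one has
  H_0(0) = +infinity, so the defining inequality fails there; hence only c > 0 is admitted.\<close>
definition cn_set :: "nat \<Rightarrow> real set" where
  "cn_set n = {c. 0 < c \<and> c \<le> 1 / real n \<and>
                  integral {c..1 / real n} (H0 n) \<ge> (1 / real n - c) * H0 n c}"

definition cn0 :: "nat \<Rightarrow> real" where
  "cn0 n = Inf (cn_set n)"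

definition phi0 :: "nat \<Rightarrow> real" where
  "phi0 n = (if cn0 n > 0 then H0 n (cn0 n) else real n)"

end

theory Submission
  imports Defs
begin

text \<open>\<^term>\<open>H0 n\<close> is convex on its domain, so for an admissible \<open>c\<close> the trapezoid rule
  bounds \<open>\<integral> H0 n\<close> over \<open>[c, 1/n]\<close> by \<open>(1/n - c) (H0 n c + H0 n (1/n)) / 2\<close>; together with
  the defining inequality of \<^term>\<open>cn_set n\<close> this gives \<open>H0 n c \<le> H0 n (1/n) = n log n\<close>.
  Since \<open>H0 n c \<ge> - log c\<close>, the admissible set stays above \<open>exp (- n log n)\<close>, so
  \<^term>\<open>cn0 n > 0\<close> and \<^term>\<open>phi0 n = H0 n (cn0 n)\<close>; continuity of \<^term>\<open>H0 n\<close> carries the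
  bound over to the infimum.\<close>

lemma convex_on_neg_ln_affine:
  fixes a b :: real
  shows "convex_on {x. 0 < a + b * x} (\<lambda>x. - ln (a + b * x))"
proof (rule convex_onI)
  have "{x. 0 < a + b * x} = {x. inner b x > - a}"
    by auto
  then show "convex {x. 0 < a + b * x}"
    by (simp only: convex_halfspace_gt)
next
  fix t x y :: real
  assume t: "0 < t" "t < 1" and xy: "x \<in> {x. 0 < a + b * x}" "y \<in> {x. 0 < a + b * x}"
  have "a + b * ((1 - t) *\<^sub>R x + t *\<^sub>R y) = (1 - t) * (a + b * x) + t * (a + b * y)"
    by (simp add: algebra_simps)
  moreover have "(1 - t) * ln (a + b * x) + t * ln (a + b * y)
      \<le> ln ((1 - t) *\<^sub>R (a + b * x) + t *\<^sub>R (a + b * y))"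
    using concave_onD[OF ln_concave] t xy by simp
  ultimately show "- ln (a + b * ((1 - t) *\<^sub>R x + t *\<^sub>R y))
      \<le> (1 - t) * - ln (a + b * x) + t * - ln (a + b * y)"
    by simp
qed

lemma integral_le_trapezoid_if_convex_on:
  fixes f :: "real \<Rightarrow> real"
  assumes convex: "convex_on {a..b} f" and cont: "continuous_on {a..b} f" and "a \<le> b"
  shows "integral {a..b} f \<le> (b - a) * (f a + f b) / 2"
proof (cases "a = b")
  case False
  then have "a < b" using \<open>a \<le> b\<close> by simp
  define s where "s = (f b - f a) / (b - a)"
  have chord: "((\<lambda>x. s * (x - a) + f a) has_integral (b - a) * (f a + f b) / 2) {a..b}"
  proof -
    have "((\<lambda>x. s * (x - a) + f a) has_integral
        (s * (b - a)^2 / 2 + f a * b) - (s * (a - a)^2 / 2 + f a * a)) {a..b}"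
      using \<open>a \<le> b\<close> by (intro fundamental_theorem_of_calculus)
        (auto intro!: derivative_eq_intros simp: has_real_derivative_iff_has_vector_derivative[symmetric])
    also have "(s * (b - a)^2 / 2 + f a * b) - (s * (a - a)^2 / 2 + f a * a) = (b - a) * (f a + f b) / 2"
      using \<open>a < b\<close> by (simp add: s_def power2_eq_square field_simps)
    finally show ?thesis .
  qed
  have "integral {a..b} f \<le> integral {a..b} (\<lambda>x. s * (x - a) + f a)"
    using integrable_continuous_real[OF cont] chord convex_onD_Icc'[OF convex]
    by (intro integral_le) (auto simp: s_def)
  then show ?thesis using chord by (simp add: integral_unique)
qed simp

lemma le_at_Inf_if_isCont:
  fixes f :: "real \<Rightarrow> real"
  assumes "S \<noteq> {}" "bdd_below S" "isCont f (Inf S)" "\<And>x. x \<in> S \<Longrightarrow> f x \<le> a"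
  shows "f (Inf S) \<le> a"
proof -
  obtain x where x: "\<And>k. x k \<in> S" "x \<longlonglongrightarrow> Inf S"
    using closure_contains_Inf[OF assms(1,2)] by (auto simp: closure_sequential)
  have "(\<lambda>k. f (x k)) \<longlonglongrightarrow> f (Inf S)"
    using isCont_tendsto_compose[OF assms(3) x(2)] .
  then show ?thesis using assms(4) x(1) by (intro LIMSEQ_le_const2) auto
qed

definition H0_domain :: "nat \<Rightarrow> real set" where
  "H0_domain n = {x. 0 < x \<and> real (n - 1) * x < 1}"

lemma convex_H0_domain: "convex (H0_domain n)"
  unfolding is_interval_convex_1[symmetric] is_interval_1
proof (intro ballI allI impI)
  fix x y z :: real
  assume "x \<in> H0_domain n" "y \<in> H0_domain n" "x \<le> z \<and> z \<le> y"
  moreover have "real (n - 1) * z \<le> real (n - 1) * y"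
    using \<open>x \<le> z \<and> z \<le> y\<close> by (simp add: mult_left_mono)
  ultimately show "z \<in> H0_domain n" by (simp add: H0_domain_def)
qed

lemma open_H0_domain: "open (H0_domain n)"
  unfolding H0_domain_def by (intro open_Collect_conj open_Collect_less continuous_intros)

lemma convex_on_H0: "convex_on (H0_domain n) (H0 n)"
proof -
  define m where "m = real (n - 1)"
  have "convex_on (H0_domain n) (\<lambda>x. m * - ln (1 + (- m) * x) + - ln (0 + 1 * x))"
  proof (intro convex_on_add convex_on_cmul)
    show "convex_on (H0_domain n) (\<lambda>x. - ln (1 + - m * x))"
      and "convex_on (H0_domain n) (\<lambda>x. - ln (0 + 1 * x))"
      by (rule convex_on_subset[OF convex_on_neg_ln_affine _ convex_H0_domain];
          auto simp: H0_domain_def m_def)+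
  qed (simp add: m_def)
  moreover have "H0 n = (\<lambda>x. m * - ln (1 + (- m) * x) + - ln (0 + 1 * x))"
    by (simp add: fun_eq_iff H0_def G_def m_def)
  ultimately show ?thesis by simp
qed

lemma continuous_on_H0: "continuous_on (H0_domain n) (H0 n)"
  using open_H0_domain convex_on_H0 by (rule convex_on_continuous)

lemma neg_ln_le_H0:
  assumes "x \<in> H0_domain n"
  shows "- ln x \<le> H0 n x"
proof -
  have "ln (1 - real (n - 1) * x) \<le> 0"
    using assms by (simp add: H0_domain_def)
  then show ?thesis by (simp add: H0_def G_def mult_nonneg_nonpos)
qed

lemma Icc_subset_H0_domain:
  assumes "n \<ge> 2" "0 < c"
  shows "{c..1 / real n} \<subseteq> H0_domain n"
proof
  fix x assume x: "x \<in> {c..1 / real n}"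
  then have "real (n - 1) * x \<le> real (n - 1) * (1 / real n)"
    by (intro mult_left_mono) auto
  also have "\<dots> = (real n - 1) / real n" using assms(1) by (simp add: of_nat_diff)
  also have "\<dots> < 1" using assms(1) by simp
  finally show "x \<in> H0_domain n" using x assms(2) by (simp add: H0_domain_def)
qed

lemma H0_one_over_n: "n \<ge> 2 \<Longrightarrow> H0 n (1 / real n) = real n * ln (real n)"
  by (simp add: H0_def G_def of_nat_diff ln_div field_simps)

lemma H0_le_of_mem_cn_set:
  assumes n: "n \<ge> 2" and c: "c \<in> cn_set n"
  shows "H0 n c \<le> real n * ln (real n)"
proof -
  define b where "b = 1 / real n"
  have "0 < c" "c \<le> b" and admissible: "(b - c) * H0 n c \<le> integral {c..b} (H0 n)"
    using c by (auto simp: cn_set_def b_def)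
  have "{c..b} \<subseteq> H0_domain n"
    using Icc_subset_H0_domain[OF n \<open>0 < c\<close>] by (simp add: b_def)
  then have "integral {c..b} (H0 n) \<le> (b - c) * (H0 n c + H0 n b) / 2"
    using convex_on_subset[OF convex_on_H0] continuous_on_subset[OF continuous_on_H0] \<open>c \<le> b\<close>
    by (intro integral_le_trapezoid_if_convex_on) auto
  with admissible have "(b - c) * H0 n c \<le> (b - c) * H0 n b"
    by (simp add: algebra_simps)
  then have "H0 n c \<le> H0 n b"
    using \<open>c \<le> b\<close> by (cases "c = b") auto
  then show ?thesis using H0_one_over_n[OF n] by (simp add: b_def)
qed

lemma one_over_n_mem_cn_set: "n \<ge> 2 \<Longrightarrow> 1 / real n \<in> cn_set n"
  by (simp add: cn_set_def)

lemma bdd_below_cn_set: "bdd_below (cn_set n)"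
  by (rule bdd_belowI[of _ 0]) (auto simp: cn_set_def)

lemma exp_le_of_mem_cn_set:
  assumes n: "n \<ge> 2" and c: "c \<in> cn_set n"
  shows "exp (- (real n * ln (real n))) \<le> c"
proof -
  have "0 < c" "c \<le> 1 / real n" using c by (auto simp: cn_set_def)
  then have "c \<in> H0_domain n" using Icc_subset_H0_domain[OF n \<open>0 < c\<close>] by auto
  then have "- ln c \<le> real n * ln (real n)"
    using neg_ln_le_H0 H0_le_of_mem_cn_set[OF n c] by fastforce
  then have "exp (- (real n * ln (real n))) \<le> exp (ln c)"
    by simp
  then show ?thesis using \<open>0 < c\<close> by simp
qed

lemma cn0_bounds:
  assumes "n \<ge> 2"
  shows "0 < cn0 n" and "cn0 n \<le> 1 / real n"
proof -
  have "exp (- (real n * ln (real n))) \<le> cn0 n"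
    unfolding cn0_def using one_over_n_mem_cn_set[OF assms] exp_le_of_mem_cn_set[OF assms]
    by (intro cInf_greatest) auto
  then show "0 < cn0 n" using exp_gt_zero by (rule order.strict_trans2[rotated])
  show "cn0 n \<le> 1 / real n"
    unfolding cn0_def using one_over_n_mem_cn_set[OF assms] bdd_below_cn_set by (rule cInf_lower)
qed

lemma phi0_bounds:
  assumes n: "n \<ge> 2"
  shows "0 < phi0 n" and "phi0 n \<le> real n * ln (real n)"
proof -
  have phi: "phi0 n = H0 n (cn0 n)"
    using cn0_bounds(1)[OF n] by (simp add: phi0_def)
  have dom: "cn0 n \<in> H0_domain n"
    using Icc_subset_H0_domain[OF n cn0_bounds(1)[OF n]] cn0_bounds(2)[OF n] by auto
  have "1 / real n < 1" using n by (simp add: divide_less_eq_1)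
  then have "cn0 n < 1"
    using cn0_bounds(2)[OF n] by linarith
  then have "0 < - ln (cn0 n)"
    using cn0_bounds(1)[OF n] by simp
  then show "0 < phi0 n"
    using neg_ln_le_H0[OF dom] phi by linarith
  have "cn_set n \<noteq> {}"
    using one_over_n_mem_cn_set[OF n] by blast
  moreover have "isCont (H0 n) (Inf (cn_set n))"
    using continuous_on_eq_continuous_at[OF open_H0_domain] continuous_on_H0 dom
    unfolding cn0_def by blast
  ultimately have "H0 n (Inf (cn_set n)) \<le> real n * ln (real n)"
    by (rule le_at_Inf_if_isCont[OF _ bdd_below_cn_set _ H0_le_of_mem_cn_set[OF n]])
  then show "phi0 n \<le> real n * ln (real n)"
    by (simp only: phi cn0_def)
qed

theorem corollary2:
  fixes n :: nat and \<rho> :: real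
  assumes "n \<ge> 2" and "\<rho> > 0"
  shows "log 2 (1 + \<rho> * phi0 n) \<le> log 2 (1 + \<rho> * (real n * ln (real n)))"
proof (rule log_mono)
  have "0 < \<rho> * phi0 n"
    using assms(2) phi0_bounds(1)[OF assms(1)] by (rule mult_pos_pos)
  then show "0 < 1 + \<rho> * phi0 n" by linarith
  have "\<rho> * phi0 n \<le> \<rho> * (real n * ln (real n))"
    using phi0_bounds(2)[OF assms(1)] assms(2) by (intro mult_left_mono) auto
  then show "1 + \<rho> * phi0 n \<le> 1 + \<rho> * (real n * ln (real n))" by linarith
qed simp

end
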